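(* Let $T\subseteq S_k$, let $p\geq 1$, and let $n\geq k+p+1$. Then $S_n(\nu^p(T))=S_n(T)$.
   Context: Two sequences are order-isomorphic if they have the same length $m$ and for all $i<j$, $x_i<x_j$ iff $y_i<y_j$. A permutation $\sigma\in S_n$ contains $\pi\in S_m$ if some subsequence $(\sigma_{i_1},\dots,\sigma_{i_m})$, $i_1<\dots<i_m$, is order-isomorphic to $\pi$; otherwise it avoids $\pi$. For a set $A$ of permutations, $S_n(A)$ is the set of permutations in $S_n$ avoiding every element of $A$. For $\tau\in S_k$ and $m\ge k$, $V_\tau^m$ is the set of all $\alpha\in S_m$ that contain $\tau$. For $T\subseteq S_k$ (any $k$), $\nu(T)=\bigcup_{\tau\in T}V_\tau^{k+1}\subseteq S_{k+1}$; $\nu^1=\nu$ and $\nu^p(T)=\nu(\nu^{p-1}(T))\subseteq S_{k+p}$ for $p>1$. *)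

theory Defs
  imports Main
begin

text \<open>Permutations of length n are represented as lists of naturals: S_n is the set of
  lists that are arrangements of 1..n (one-line notation).\<close>

definition perms :: "nat \<Rightarrow> nat list set" where
  "perms n = {xs. distinct xs \<and> set xs = {1..n}}"

definition order_iso :: "nat list \<Rightarrow> nat list \<Rightarrow> bool" where
  "order_iso xs ys \<longleftrightarrow> length xs = length ys \<and>
     (\<forall>i j. i < j \<and> j < length xs \<longrightarrow> (xs ! i < xs ! j \<longleftrightarrow> ys ! i < ys ! j))"

definition contains :: "nat list \<Rightarrow> nat list \<Rightarrow> bool" where
  "contains \<sigma> \<pi> \<longleftrightarrow> (\<exists>I. I \<subseteq> {..<length \<sigma>} \<and> order_iso (nths \<sigma> I) \<pi>)"

definition avoiders :: "nat \<Rightarrow> nat list set \<Rightarrow> nat list set" where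
  "avoiders n A = {\<sigma> \<in> perms n. \<forall>\<pi>\<in>A. \<not> contains \<sigma> \<pi>}"

definition V :: "nat list \<Rightarrow> nat \<Rightarrow> nat list set" where
  "V \<tau> m = {\<alpha> \<in> perms m. contains \<alpha> \<tau>}"

definition nu :: "nat \<Rightarrow> nat list set \<Rightarrow> nat list set" where
  "nu k T = (\<Union>\<tau>\<in>T. V \<tau> (k + 1))"

fun nu_pow :: "nat \<Rightarrow> nat \<Rightarrow> nat list set \<Rightarrow> nat list set" where
  "nu_pow p k T = (if p = 0 then T else nu (k + (p - 1)) (nu_pow (p - 1) k T))"

end

theory Submission
  imports Defs "HOL-Library.Sublist"
begin

text \<open>Every member of \<open>\<nu>(T)\<close> contains a pattern from \<open>T\<close>, so by transitivity of
  containment a permutation avoiding \<open>T\<close> avoids \<open>\<nu>(T)\<close>. Conversely, if \<open>\<sigma> \<in> S\<^sub>n\<close>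
  contains \<open>\<tau> \<in> T \<subseteq> S\<^sub>k\<close> and \<open>n > k\<close>, an occurrence of \<open>\<tau>\<close> in \<open>\<sigma>\<close> can be enlarged by one
  further entry of \<open>\<sigma>\<close>; the pattern of the enlarged occurrence lies in \<open>\<nu>(T)\<close> and is
  contained in \<open>\<sigma>\<close>. Hence \<open>S\<^sub>n(\<nu>(T)) = S\<^sub>n(T)\<close> for \<open>n > k\<close>, and induction on \<open>p\<close> gives
  \<open>S\<^sub>n(\<nu>\<^sup>p(T)) = S\<^sub>n(T)\<close> already for \<open>n \<ge> k + p\<close>.\<close>

lemma order_iso_refl: "order_iso xs xs"
  unfolding order_iso_def by auto

lemma order_iso_sym: "order_iso xs ys \<Longrightarrow> order_iso ys xs"
  unfolding order_iso_def by auto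

lemma order_iso_trans: "order_iso xs ys \<Longrightarrow> order_iso ys zs \<Longrightarrow> order_iso xs zs"
  unfolding order_iso_def by auto

lemma order_iso_iff_sorted_wrt_zip:
  "order_iso xs ys \<longleftrightarrow>
     length xs = length ys \<and> sorted_wrt (\<lambda>(a, b) (c, d). a < c \<longleftrightarrow> b < d) (zip xs ys)"
  unfolding order_iso_def sorted_wrt_iff_nth_less by auto

lemma order_iso_map:
  assumes "\<And>x y. x \<in> set xs \<Longrightarrow> y \<in> set xs \<Longrightarrow> f x < f y \<longleftrightarrow> x < y"
  shows "order_iso xs (map f xs)"
  unfolding order_iso_def using assms by auto

lemma nths_zip:
  "length xs = length ys \<Longrightarrow> nths (zip xs ys) I = zip (nths xs I) (nths ys I)"
proof (induction xs arbitrary: ys I)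
  case (Cons x xs)
  then obtain y ys' where "ys = y # ys'" by (cases ys) auto
  with Cons show ?case by (simp add: nths_Cons)
qed simp

lemma sorted_wrt_nths: "sorted_wrt R xs \<Longrightarrow> sorted_wrt R (nths xs I)"
proof (induction xs arbitrary: I)
  case (Cons x xs)
  then show ?case by (auto simp: nths_Cons dest: in_set_nthsD)
qed simp

lemma order_iso_nths:
  assumes "order_iso xs ys"
  shows "order_iso (nths xs I) (nths ys I)"
proof -
  have "length xs = length ys" using assms by (simp add: order_iso_def)
  with assms show ?thesis
    by (auto simp: order_iso_iff_sorted_wrt_zip length_nths simp flip: nths_zip
             intro: sorted_wrt_nths)
qed

lemma order_iso_subseq:
  assumes "subseq xs' xs" "order_iso xs ys"
  obtains ys' where "subseq ys' ys" "order_iso xs' ys'"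
  using assms order_iso_nths by (metis subseq_conv_nths)

lemma nths_inter_lessThan: "nths xs (I \<inter> {..<length xs}) = nths xs I"
  unfolding nths_def by (rule arg_cong[where f = "map fst"], rule filter_cong)
    (auto dest: set_zip_rightD)

lemma contains_iff_subseq: "contains \<sigma> \<pi> \<longleftrightarrow> (\<exists>xs. subseq xs \<sigma> \<and> order_iso xs \<pi>)"
  unfolding contains_def subseq_conv_nths by (metis inf_le2 nths_inter_lessThan)

lemma contains_trans:
  assumes "contains \<alpha> \<beta>" and "contains \<beta> \<gamma>"
  shows "contains \<alpha> \<gamma>"
proof -
  obtain xs where xs: "subseq xs \<alpha>" "order_iso xs \<beta>"
    using assms(1) unfolding contains_iff_subseq by blast
  obtain ys where ys: "subseq ys \<beta>" "order_iso ys \<gamma>"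
    using assms(2) unfolding contains_iff_subseq by blast
  obtain xs' where "subseq xs' xs" "order_iso ys xs'"
    using order_iso_subseq[OF ys(1) order_iso_sym[OF xs(2)]] .
  with xs ys show ?thesis
    unfolding contains_iff_subseq
    by (meson order_iso_sym order_iso_trans subseq_order.order_trans)
qed

lemma nths_subseq_nths: "I \<subseteq> J \<Longrightarrow> subseq (nths xs I) (nths xs J)"
proof (induction xs arbitrary: I J)
  case (Cons x xs)
  have "{j. Suc j \<in> I} \<subseteq> {j. Suc j \<in> J}" using Cons.prems by auto
  then have IH: "subseq (nths xs {j. Suc j \<in> I}) (nths xs {j. Suc j \<in> J})" by (rule Cons.IH)
  show ?case
  proof (cases "0 \<in> I")
    case True
    then have "0 \<in> J" using Cons.prems by blast
    with True IH show ?thesis unfolding nths_Cons by simp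
  next
    case False
    with IH show ?thesis unfolding nths_Cons using subseq_append' by fastforce
  qed
qed simp

lemma subseq_extend:
  assumes "subseq xs s" and "length xs < length s"
  obtains ys where "subseq ys s" "length ys = Suc (length xs)" "subseq xs ys"
proof -
  obtain N where N: "N \<subseteq> {..<length s}" "xs = nths s N"
    using assms(1) by (metis inf_le2 nths_inter_lessThan subseq_conv_nths)
  have len: "length (nths s M) = card M" if "M \<subseteq> {..<length s}" for M
  proof -
    have "{j. j < length s \<and> j \<in> M} = M" using that by auto
    then show ?thesis by (simp add: length_nths)
  qed
  have "card N < card {..<length s}"
    using assms(2) len[OF N(1)] N(2) by simp
  then have "N \<noteq> {..<length s}" by auto
  then obtain i where i: "i < length s" "i \<notin> N"
    using N(1) by blast
  have "finite N" using N(1) finite_subset by blast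
  show thesis
  proof
    show "subseq (nths s (insert i N)) s"
      by (auto simp: subseq_conv_nths)
    show "subseq xs (nths s (insert i N))"
      using N(2) by (simp add: nths_subseq_nths subset_insertI)
    show "length (nths s (insert i N)) = Suc (length xs)"
      using N i \<open>finite N\<close> len by simp
  qed
qed

definition rank :: "'a::linorder set \<Rightarrow> 'a \<Rightarrow> nat" where
  "rank A x = card {a \<in> A. a \<le> x}"

lemma rank_less_iff:
  assumes "finite A" and "x \<in> A" and "y \<in> A"
  shows "rank A x < rank A y \<longleftrightarrow> x < y"
proof
  assume "x < y"
  then have "y \<in> {a \<in> A. a \<le> y} - {a \<in> A. a \<le> x}" using assms(3) by auto
  then have "{a \<in> A. a \<le> x} \<subset> {a \<in> A. a \<le> y}" using \<open>x < y\<close> by auto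
  then show "rank A x < rank A y"
    using assms(1) by (simp add: rank_def psubset_card_mono)
next
  assume less: "rank A x < rank A y"
  show "x < y"
  proof (rule ccontr)
    assume "\<not> x < y"
    then have "{a \<in> A. a \<le> y} \<subseteq> {a \<in> A. a \<le> x}" by auto
    then have "rank A y \<le> rank A x"
      using assms(1) by (simp add: rank_def card_mono)
    with less show False by simp
  qed
qed

lemma inj_on_rank:
  assumes "finite A"
  shows "inj_on (rank A) A"
proof (rule inj_onI)
  fix x y assume "x \<in> A" "y \<in> A" "rank A x = rank A y"
  then show "x = y"
    using rank_less_iff[OF assms \<open>x \<in> A\<close> \<open>y \<in> A\<close>] rank_less_iff[OF assms \<open>y \<in> A\<close> \<open>x \<in> A\<close>]
    by (cases x y rule: linorder_cases) simp_all
qed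

lemma rank_image:
  assumes "finite A"
  shows "rank A ` A = {1..card A}"
proof -
  have "card (rank A ` A) = card {1..card A}"
    using inj_on_rank[OF assms] by (simp add: card_image)
  moreover have "rank A ` A \<subseteq> {1..card A}"
  proof
    fix r assume "r \<in> rank A ` A"
    then obtain x where x: "x \<in> A" "r = rank A x" by blast
    have "{x} \<subseteq> {a \<in> A. a \<le> x}" and "{a \<in> A. a \<le> x} \<subseteq> A" using x(1) by auto
    then have "card {x} \<le> rank A x" and "rank A x \<le> card A"
      using assms unfolding rank_def by (metis card_mono finite_subset)+
    then show "r \<in> {1..card A}" using x(2) by simp
  qed
  ultimately show ?thesis
    by (simp add: card_subset_eq)
qed

lemma length_perms: "xs \<in> perms n \<Longrightarrow> length xs = n"
  unfolding perms_def using distinct_card by fastforce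

lemma ex_perms_order_iso:
  assumes "distinct ys"
  shows "\<exists>\<alpha>\<in>perms (length ys). order_iso ys \<alpha>"
proof
  show "order_iso ys (map (rank (set ys)) ys)"
    by (rule order_iso_map) (simp add: rank_less_iff)
  show "map (rank (set ys)) ys \<in> perms (length ys)"
    using assms inj_on_rank[of "set ys"] rank_image[of "set ys"]
    by (simp add: perms_def distinct_map distinct_card)
qed

lemma contains_extend_perms:
  assumes "distinct \<sigma>" and "contains \<sigma> \<alpha>" and "length \<alpha> < length \<sigma>"
  obtains \<beta> where "\<beta> \<in> perms (Suc (length \<alpha>))" "contains \<sigma> \<beta>" "contains \<beta> \<alpha>"
proof -
  obtain xs where xs: "subseq xs \<sigma>" "order_iso xs \<alpha>"
    using assms(2) unfolding contains_iff_subseq by blast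
  then have "length xs = length \<alpha>" by (simp add: order_iso_def)
  then obtain ys where ys: "subseq ys \<sigma>" "length ys = Suc (length \<alpha>)" "subseq xs ys"
    using subseq_extend[OF xs(1)] assms(3) by metis
  have "distinct ys" using ys(1) assms(1) subseq_conv_nths distinct_nthsI by metis
  then obtain \<beta> where \<beta>: "\<beta> \<in> perms (Suc (length \<alpha>))" "order_iso ys \<beta>"
    using ex_perms_order_iso ys(2) by metis
  obtain xs' where "subseq xs' \<beta>" "order_iso xs xs'"
    using order_iso_subseq[OF ys(3) \<beta>(2)] .
  then have "contains \<beta> \<alpha>"
    unfolding contains_iff_subseq using xs(2) order_iso_sym order_iso_trans by blast
  moreover have "contains \<sigma> \<beta>"
    unfolding contains_iff_subseq using ys(1) \<beta>(2) by blast
  ultimately show thesis using \<beta>(1) that by blast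
qed

lemma mem_nu_iff: "\<alpha> \<in> nu k T \<longleftrightarrow> \<alpha> \<in> perms (Suc k) \<and> (\<exists>\<tau>\<in>T. contains \<alpha> \<tau>)"
  unfolding nu_def V_def by auto

lemma avoiders_nu:
  assumes "T \<subseteq> perms k" and "k < n"
  shows "avoiders n (nu k T) = avoiders n T"
proof (intro set_eqI iffI)
  fix \<sigma> assume "\<sigma> \<in> avoiders n (nu k T)"
  then have \<sigma>: "\<sigma> \<in> perms n" and avoids: "\<And>\<alpha>. \<alpha> \<in> nu k T \<Longrightarrow> \<not> contains \<sigma> \<alpha>"
    unfolding avoiders_def by auto
  have "\<not> contains \<sigma> \<tau>" if "\<tau> \<in> T" for \<tau>
  proof
    assume "contains \<sigma> \<tau>"
    moreover have "length \<tau> = k" using that assms(1) length_perms by blast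
    moreover have "distinct \<sigma>" "length \<sigma> = n" using \<sigma> length_perms by (auto simp: perms_def)
    ultimately obtain \<beta> where "\<beta> \<in> perms (Suc k)" "contains \<sigma> \<beta>" "contains \<beta> \<tau>"
      using contains_extend_perms assms(2) by metis
    then show False using avoids that by (auto simp: mem_nu_iff)
  qed
  with \<sigma> show "\<sigma> \<in> avoiders n T" unfolding avoiders_def by blast
next
  fix \<sigma> assume "\<sigma> \<in> avoiders n T"
  then show "\<sigma> \<in> avoiders n (nu k T)"
    unfolding avoiders_def using contains_trans by (fastforce simp: mem_nu_iff)
qed

lemma nu_pow_0 [simp]: "nu_pow 0 k T = T"
  by simp

lemma nu_pow_Suc [simp]: "nu_pow (Suc p) k T = nu (k + p) (nu_pow p k T)"
  by simp

declare nu_pow.simps [simp del]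

lemma nu_pow_subset_perms: "T \<subseteq> perms k \<Longrightarrow> nu_pow p k T \<subseteq> perms (k + p)"
  by (induction p) (auto simp: mem_nu_iff)

lemma avoiders_nu_pow:
  assumes "T \<subseteq> perms k" and "k + p \<le> n"
  shows "avoiders n (nu_pow p k T) = avoiders n T"
  using assms(2)
proof (induction p)
  case (Suc p)
  then show ?case using avoiders_nu[OF nu_pow_subset_perms[OF assms(1)]] by simp
qed simp

theorem theorem2p8:
  fixes T :: "nat list set" and k p n :: nat
  assumes "T \<subseteq> perms k" and "p \<ge> 1" and "n \<ge> k + p + 1"
  shows "avoiders n (nu_pow p k T) = avoiders n T"
  using avoiders_nu_pow assms by simp

end
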